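(* Let $m,n\geq 2$. There exists a $\mathrm{M}^0_{\mathbb Z_{mn+1}^*}(m,n;n,m)$ (an $m\times n$ array with no empty cells) if and only if $mn+1$ is odd and $mn+1>5$.
   Context: For an abelian group $\Gamma$ and $\Omega\subseteq\Gamma$, a zero-sum magic partially filled array $\mathrm{M}^0_\Omega(m,n;s,k)$ is an $m\times n$ array, some cells of which may be empty, with entries in $\Omega$ in which every element of $\Omega$ appears exactly once, each row has exactly $s$ and each column exactly $k$ filled cells, and all row and column sums equal $0_\Gamma$. $\mathbb Z_N$ is the cyclic group of order $N$ and $\mathbb Z_N^*=\mathbb Z_N\setminus\{0\}$. *)

theory Defs
  imports Main
begin

text \<open>Elements of the cyclic group Z_N are represented by their canonical
representatives 0..N-1 (natural numbers); addition is taken modulo N.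
A partially filled m x n array is a function A :: nat => nat => nat option,
only the cells (i,j) with i < m, j < n being relevant; None = empty cell.\<close>

definition zero_sum_magic_pfa ::
  "nat \<Rightarrow> nat set \<Rightarrow> nat \<Rightarrow> nat \<Rightarrow> nat \<Rightarrow> nat \<Rightarrow> (nat \<Rightarrow> nat \<Rightarrow> nat option) \<Rightarrow> bool" where
  "zero_sum_magic_pfa N \<Omega> m n s k A \<longleftrightarrow>
     \<Omega> \<subseteq> {0..<N} \<and>
     (\<forall>i<m. \<forall>j<n. \<forall>x. A i j = Some x \<longrightarrow> x \<in> \<Omega>) \<and>
     (\<forall>x\<in>\<Omega>. card {(i, j). i < m \<and> j < n \<and> A i j = Some x} = 1) \<and>
     (\<forall>i<m. card {j. j < n \<and> A i j \<noteq> None} = s) \<and>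
     (\<forall>j<n. card {i. i < m \<and> A i j \<noteq> None} = k) \<and>
     (\<forall>i<m. (\<Sum>j\<in>{j. j < n \<and> A i j \<noteq> None}. the (A i j)) mod N = 0) \<and>
     (\<forall>j<n. (\<Sum>i\<in>{i. i < m \<and> A i j \<noteq> None}. the (A i j)) mod N = 0)"

definition Zstar :: "nat \<Rightarrow> nat set" where
  "Zstar N = {1..<N}"

end

theory Submission
  imports Defs
begin

text \<open>
  Necessity: a full array over \<open>\<int>\<^sub>N\<^sup>*\<close>, \<open>N = mn + 1\<close>, contains every nonzero residue once, so its
  row sums add up to \<open>1 + \<dots> + (N - 1)\<close>, which is \<open>N/2 \<noteq> 0\<close> modulo an even \<open>N\<close>; for \<open>N = 5\<close>
  the \<open>2 \<times> 2\<close> array would need \<open>a + b = a + c = 5\<close> with \<open>b \<noteq> c\<close>.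

  Sufficiency: reducing modulo \<open>N\<close> maps \<open>\<plusminus>1, \<dots>, \<plusminus>mn/2\<close> bijectively onto \<open>\<int>\<^sub>N\<^sup>*\<close>, so it is
  enough to build a signed magic array, i.e. one with these entries whose line sums vanish (in
  \<open>\<int>\<close>, or just modulo \<open>N\<close>). Such arrays are glued from smaller ones: a sign balanced block can be
  appended after moving its entries away from zero. The seeds are a \<open>2 \<times> 4\<close> block, a
  \<open>6 \<times> 6\<close> square, two families with 3 and 5 columns obtained by permuting a fixed content in each
  row, and, for two rows, a top row \<open>\<plusminus>1, \<dots>, \<plusminus>n\<close> whose sum is \<open>0\<close> modulo \<open>2n + 1\<close>.
\<close>

lemma less_4_cases: "(k::nat) < 4 \<longleftrightarrow> k = 0 \<or> k = 1 \<or> k = 2 \<or> k = 3" by auto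

lemma less_5_cases: "(k::nat) < 5 \<longleftrightarrow> k = 0 \<or> k = 1 \<or> k = 2 \<or> k = 3 \<or> k = 4" by auto

lemma less_8_cases: "(k::nat) < 8 \<longleftrightarrow> k = 0 \<or> k = 1 \<or> k = 2 \<or> k = 3 \<or> k = 4 \<or> k = 5 \<or> k = 6 \<or> k = 7" by auto

lemma sum_lessThan_add_split:
  fixes n1 n2 :: nat
  shows "(\<Sum>j<n1 + n2. f j) = (\<Sum>j<n1. f j) + (\<Sum>j<n2. f (j + n1))"
proof -
  have "(\<Sum>j<n1 + n2. f j) = (\<Sum>j\<in>{0..<n1}. f j) + (\<Sum>j\<in>{n1..<n1 + n2}. f j)"
    by (simp add: sum.atLeastLessThan_concat lessThan_atLeast0)
  also have "(\<Sum>j\<in>{n1..<n1 + n2}. f j) = (\<Sum>j<n2. f (j + n1))"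
    using sum.shift_bounds_nat_ivl[of f 0 n1 n2] by (simp add: lessThan_atLeast0 add.commute)
  finally show ?thesis by (simp add: lessThan_atLeast0)
qed

lemma inj_on_card_eq_imp_bij_betw:
  assumes "finite Y" "inj_on f X" "f ` X \<subseteq> Y" "card X = card Y"
  shows "bij_betw f X Y"
proof -
  have "f ` X = Y"
    using assms card_image[OF assms(2)] by (intro card_subset_eq) auto
  then show ?thesis using assms(2) by (simp add: bij_betw_def)
qed

lemma bij_betw_iff_card_fibers:
  assumes "h ` X \<subseteq> Y"
  shows "bij_betw h X Y \<longleftrightarrow> (\<forall>y\<in>Y. card {x \<in> X. h x = y} = 1)"
proof
  assume bij: "bij_betw h X Y"
  show "\<forall>y\<in>Y. card {x \<in> X. h x = y} = 1"
  proof
    fix y assume "y \<in> Y"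
    then obtain x where "x \<in> X" "h x = y" using bij unfolding bij_betw_def by blast
    then have "{x \<in> X. h x = y} = {x}"
      using bij unfolding bij_betw_def inj_on_def by blast
    then show "card {x \<in> X. h x = y} = 1" by simp
  qed
next
  assume fibers: "\<forall>y\<in>Y. card {x \<in> X. h x = y} = 1"
  have "inj_on h X"
  proof (rule inj_onI)
    fix x x' assume "x \<in> X" "x' \<in> X" "h x = h x'"
    moreover obtain z where "{w \<in> X. h w = h x} = {z}"
      using assms fibers \<open>x \<in> X\<close> by (metis card_1_singletonE image_subset_iff)
    ultimately show "x = x'" by (metis (mono_tags, lifting) mem_Collect_eq singletonD)
  qed
  moreover have "Y \<subseteq> h ` X"
  proof
    fix y assume "y \<in> Y"
    then obtain x where "{w \<in> X. h w = y} = {x}" using fibers by (metis card_1_singletonE)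
    then have "x \<in> X" "h x = y" by auto
    then show "y \<in> h ` X" by blast
  qed
  ultimately show "bij_betw h X Y" using assms by (auto simp: bij_betw_def)
qed

lemma bij_betw_nth_permutation:
  assumes "distinct xs" "set xs = {..<n}"
  shows "bij_betw ((!) xs) {..<n} {..<n}"
proof -
  have "length xs = n" using distinct_card[OF assms(1)] assms(2) by simp
  then show ?thesis using assms by (intro bij_betw_nth) auto
qed

lemma sum_nat_mod_eq_zero:
  fixes N :: nat
  assumes "N > 0" "(\<Sum>j\<in>J. f j) mod int N = 0"
  shows "(\<Sum>j\<in>J. nat (f j mod int N)) mod N = 0"
proof -
  have "int (\<Sum>j\<in>J. nat (f j mod int N)) = (\<Sum>j\<in>J. f j mod int N)"
    using assms(1) by simp
  then have "int ((\<Sum>j\<in>J. nat (f j mod int N)) mod N) = (\<Sum>j\<in>J. f j) mod int N"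
    by (simp add: of_nat_mod mod_sum_eq)
  then show ?thesis using assms(2) by simp
qed

lemma sum_mod_eq_zero_if_row_sums:
  assumes "bij_betw h ({..<m} \<times> {..<n}) S" "\<And>i. i < m \<Longrightarrow> (\<Sum>j<n. h (i, j)) mod (N::nat) = 0"
  shows "(\<Sum>x\<in>S. x) mod N = 0"
proof -
  have "(\<Sum>x\<in>S. x) = (\<Sum>i<m. \<Sum>j<n. h (i, j))"
    using sum.reindex_bij_betw[OF assms(1), of "\<lambda>x. x"] by (simp add: sum.cartesian_product)
  also have "\<dots> mod N = (\<Sum>i<m. (\<Sum>j<n. h (i, j)) mod N) mod N"
    by (simp add: mod_sum_eq)
  finally show ?thesis using assms(2) by simp
qed

lemma sum_atLeastLessThan_one_mod_even:
  fixes N :: nat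
  assumes "even N"
  shows "(\<Sum>x\<in>{1..<N}. x) mod N = N div 2"
proof -
  obtain k where N: "N = 2 * k" using assms by blast
  have "2 * (\<Sum>x\<in>{1..<N}. x) = N * (N - 1)"
  proof (induction N)
    case (Suc N)
    then show ?case by (cases N) (auto simp: atLeastLessThanSuc algebra_simps)
  qed simp
  then have "(\<Sum>x\<in>{1..<N}. x) = (k - 1) * N + k"
    unfolding N by (cases k) (auto simp: algebra_simps)
  then have "(\<Sum>x\<in>{1..<N}. x) mod N = k mod N" by simp
  then show ?thesis using N by (cases "k = 0") auto
qed

lemma double_sum_affine:
  assumes "a \<le> b"
  shows "2 * (\<Sum>i\<in>{a..<b}. (\<alpha>::int) + \<beta> * int i) =
         2 * (int b - int a) * \<alpha> + \<beta> * (int b * (int b - 1) - int a * (int a - 1))"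
  using assms
proof (induction b)
  case 0 then show ?case by simp
next
  case (Suc b)
  then show ?case
    by (cases "a = Suc b") (auto simp: algebra_simps atLeastLessThanSuc)
qed

lemma sum_atLeastLessThan_breakpoints:
  fixes b :: "nat \<Rightarrow> nat"
  assumes "\<And>k. k < n \<Longrightarrow> b k \<le> b (Suc k)"
  shows "sum f {b 0..<b n} = (\<Sum>k<n. sum f {b k..<b (Suc k)})"
proof -
  have "b 0 \<le> b n \<and> sum f {b 0..<b n} = (\<Sum>k<n. sum f {b k..<b (Suc k)})"
    using assms
  proof (induction n)
    case (Suc n)
    have "b 0 \<le> b n" "sum f {b 0..<b n} = (\<Sum>k<n. sum f {b k..<b (Suc k)})"
      using Suc by simp_all
    moreover have "b n \<le> b (Suc n)" using Suc.prems by simp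
    ultimately show ?case using sum.atLeastLessThan_concat[of "b 0" "b n" "b (Suc n)" f] by simp
  qed simp
  then show ?thesis ..
qed

section \<open>Signed magic arrays\<close>

definition signed_range :: "nat \<Rightarrow> int set" where
  "signed_range L = {x. x \<noteq> 0 \<and> - int L \<le> x \<and> x \<le> int L}"

definition signed_magic :: "nat \<Rightarrow> nat \<Rightarrow> (nat \<Rightarrow> nat \<Rightarrow> int) \<Rightarrow> bool" where
  "signed_magic m n B \<longleftrightarrow> even (m * n)
     \<and> bij_betw (\<lambda>(i, j). B i j) ({..<m} \<times> {..<n}) (signed_range (m * n div 2))
     \<and> (\<forall>i<m. (\<Sum>j<n. B i j) = 0) \<and> (\<forall>j<n. (\<Sum>i<m. B i j) = 0)"

text \<open>Two-row arrays need the weaker condition: \<open>\<plusminus>1 \<plusminus> \<dots> \<plusminus> n\<close> is never \<open>0\<close> when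
  \<open>n \<equiv> 1, 2 (mod 4)\<close>.\<close>
definition signed_magic_mod :: "nat \<Rightarrow> nat \<Rightarrow> (nat \<Rightarrow> nat \<Rightarrow> int) \<Rightarrow> bool" where
  "signed_magic_mod m n B \<longleftrightarrow> even (m * n)
     \<and> bij_betw (\<lambda>(i, j). B i j) ({..<m} \<times> {..<n}) (signed_range (m * n div 2))
     \<and> (\<forall>i<m. (\<Sum>j<n. B i j) mod (int (m * n) + 1) = 0)
     \<and> (\<forall>j<n. (\<Sum>i<m. B i j) mod (int (m * n) + 1) = 0)"

definition sign_balanced :: "nat \<Rightarrow> nat \<Rightarrow> (nat \<Rightarrow> nat \<Rightarrow> int) \<Rightarrow> bool" where
  "sign_balanced m n B \<longleftrightarrow>
     (\<forall>i<m. (\<Sum>j<n. sgn (B i j)) = 0) \<and> (\<forall>j<n. (\<Sum>i<m. sgn (B i j)) = 0)"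

definition sign_shift :: "nat \<Rightarrow> (nat \<Rightarrow> nat \<Rightarrow> int) \<Rightarrow> nat \<Rightarrow> nat \<Rightarrow> int" where
  "sign_shift L B i j = B i j + sgn (B i j) * int L"

definition hconcat :: "nat \<Rightarrow> (nat \<Rightarrow> nat \<Rightarrow> int) \<Rightarrow> (nat \<Rightarrow> nat \<Rightarrow> int) \<Rightarrow> nat \<Rightarrow> nat \<Rightarrow> int" where
  "hconcat n1 A B i j = (if j < n1 then A i j else B i (j - n1))"

definition array_transpose :: "(nat \<Rightarrow> nat \<Rightarrow> int) \<Rightarrow> nat \<Rightarrow> nat \<Rightarrow> int" where
  "array_transpose B i j = B j i"

lemma signed_range_eq: "signed_range L = {- int L..-1} \<union> {1..int L}"
  by (auto simp: signed_range_def)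

lemma signed_range_iff: "x \<in> signed_range L \<longleftrightarrow> x \<noteq> 0 \<and> \<bar>x\<bar> \<le> int L"
  by (auto simp: signed_range_def)

lemma finite_signed_range [simp]: "finite (signed_range L)"
  by (simp add: signed_range_eq)

lemma card_signed_range: "card (signed_range L) = 2 * L"
proof -
  have "card ({- int L..-1} \<union> {1..int L}) = card {- int L..-1} + card {1..int L}"
    by (rule card_Un_disjoint) auto
  then show ?thesis by (simp add: signed_range_eq)
qed

lemma sgn_sign_shift: "sgn (x + sgn x * int L) = sgn (x::int)"
  by (auto simp: sgn_if)

lemma bij_betw_sign_shift:
  "bij_betw (\<lambda>x. x + sgn x * int L1) (signed_range L2) (signed_range (L1 + L2) - signed_range L1)"
  by (rule bij_betw_byWitness[where f' = "\<lambda>y. y - sgn y * int L1"])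
    (auto simp: signed_range_def sgn_if split: if_splits)

lemma sum_sign_shift:
  "(\<Sum>x\<in>X. sign_shift L B (i x) (j x)) =
     (\<Sum>x\<in>X. B (i x) (j x)) + int L * (\<Sum>x\<in>X. sgn (B (i x) (j x)))"
  by (simp add: sign_shift_def sum.distrib sum_distrib_left mult.commute)

text \<open>Moving the entries of the right block away from zero by half the size of the left block makes
  the two entry sets disjoint; sign balance of the right block keeps the new row sums zero.\<close>
lemma signed_magic_hconcat:
  assumes A: "signed_magic m n1 A" and B: "signed_magic m n2 B" and bal: "sign_balanced m n2 B"
  shows "signed_magic m (n1 + n2) (hconcat n1 A (sign_shift (m * n1 div 2) B))"
proof -
  define L1 L2 where "L1 = m * n1 div 2" and "L2 = m * n2 div 2"
  let ?C = "hconcat n1 A (sign_shift L1 B)"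
  have ev1: "even (m * n1)" and ev2: "even (m * n2)" using A B by (auto simp: signed_magic_def)
  then have even: "even (m * (n1 + n2))" and half: "m * (n1 + n2) div 2 = L1 + L2"
    by (auto simp: L1_def L2_def distrib_left elim!: evenE)
  have left: "bij_betw (\<lambda>(i, j). ?C i j) ({..<m} \<times> {..<n1}) (signed_range L1)"
    using A unfolding signed_magic_def L1_def
    by (auto simp: hconcat_def elim!: bij_betw_cong[THEN iffD1, rotated])
  have "bij_betw ((\<lambda>x. x + sgn x * int L1) \<circ> ((\<lambda>(i, j). B i j) \<circ> (\<lambda>(i, j). (i, j - n1))))
      ({..<m} \<times> {n1..<n1 + n2}) (signed_range (L1 + L2) - signed_range L1)"
  proof (rule bij_betw_trans[OF bij_betw_trans bij_betw_sign_shift])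
    show "bij_betw (\<lambda>(i, j). (i, j - n1)) ({..<m} \<times> {n1..<n1 + n2}) ({..<m} \<times> {..<n2})"
      by (rule bij_betw_byWitness[where f' = "\<lambda>(i, j). (i, j + n1)"]) (auto simp: image_iff)
    show "bij_betw (\<lambda>(i, j). B i j) ({..<m} \<times> {..<n2}) (signed_range L2)"
      using B by (simp add: signed_magic_def L2_def)
  qed
  then have right: "bij_betw (\<lambda>(i, j). ?C i j) ({..<m} \<times> {n1..<n1 + n2})
      (signed_range (L1 + L2) - signed_range L1)"
    by (rule bij_betw_cong[THEN iffD1, rotated]) (auto simp: hconcat_def sign_shift_def)
  have "bij_betw (\<lambda>(i, j). ?C i j) ({..<m} \<times> {..<n1} \<union> {..<m} \<times> {n1..<n1 + n2})
      (signed_range L1 \<union> (signed_range (L1 + L2) - signed_range L1))"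
    by (rule bij_betw_combine[OF left right]) auto
  moreover have "{..<m} \<times> {..<n1} \<union> {..<m} \<times> {n1..<n1 + n2} = {..<m} \<times> {..<n1 + n2}" by auto
  moreover have "signed_range L1 \<union> (signed_range (L1 + L2) - signed_range L1) = signed_range (L1 + L2)"
    by (auto simp: signed_range_def)
  ultimately have bij: "bij_betw (\<lambda>(i, j). ?C i j) ({..<m} \<times> {..<n1 + n2}) (signed_range (L1 + L2))"
    by simp
  have "(\<Sum>j<n1 + n2. ?C i j) = 0" if "i < m" for i
    using A B bal that
    by (simp add: sum_lessThan_add_split hconcat_def sum_sign_shift signed_magic_def sign_balanced_def)
  moreover have "(\<Sum>i<m. ?C i j) = 0" if "j < n1 + n2" for j
    using A B bal that
    by (cases "j < n1") (simp_all add: hconcat_def sum_sign_shift signed_magic_def sign_balanced_def)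
  ultimately show ?thesis using even bij half by (simp add: signed_magic_def L1_def)
qed

lemma sign_balanced_hconcat:
  assumes "sign_balanced m n1 A" "sign_balanced m n2 B"
  shows "sign_balanced m (n1 + n2) (hconcat n1 A (sign_shift L B))"
proof -
  have "(\<Sum>i<m. sgn (hconcat n1 A (sign_shift L B) i j)) = 0" if "j < n1 + n2" for j
    using assms that
    by (cases "j < n1") (simp_all add: hconcat_def sign_balanced_def sign_shift_def sgn_sign_shift)
  then show ?thesis
    using assms by (auto simp: sign_balanced_def sum_lessThan_add_split hconcat_def sign_shift_def sgn_sign_shift)
qed

lemma bij_betw_array_transpose:
  assumes "bij_betw (\<lambda>(i, j). B i j) (I \<times> J) S"
  shows "bij_betw (\<lambda>(i, j). array_transpose B i j) (J \<times> I) S"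
proof -
  have "bij_betw prod.swap (J \<times> I) (I \<times> J)"
    by (rule bij_betw_byWitness[where f' = prod.swap]) auto
  from bij_betw_trans[OF this assms] show ?thesis
    by (rule bij_betw_cong[THEN iffD1, rotated]) (auto simp: array_transpose_def)
qed

lemma signed_magic_transpose: "signed_magic m n B \<Longrightarrow> signed_magic n m (array_transpose B)"
  using bij_betw_array_transpose[of B "{..<m}" "{..<n}"]
  by (auto simp: signed_magic_def array_transpose_def mult.commute)

lemma signed_magic_mod_transpose: "signed_magic_mod m n B \<Longrightarrow> signed_magic_mod n m (array_transpose B)"
  using bij_betw_array_transpose[of B "{..<m}" "{..<n}"]
  by (auto simp: signed_magic_mod_def array_transpose_def mult.commute)

lemma sign_balanced_transpose: "sign_balanced m n B \<Longrightarrow> sign_balanced n m (array_transpose B)"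
  by (auto simp: sign_balanced_def array_transpose_def)

lemma signed_magic_imp_mod: "signed_magic m n B \<Longrightarrow> signed_magic_mod m n B"
  by (simp add: signed_magic_def signed_magic_mod_def)

section \<open>Reduction modulo \<open>mn + 1\<close>\<close>

lemma bij_betw_mod_signed_range:
  "bij_betw (\<lambda>v. nat (v mod int (2 * L + 1))) (signed_range L) {1..<2 * L + 1}"
proof (rule inj_on_card_eq_imp_bij_betw)
  let ?N = "int (2 * L + 1)"
  have small: "x = 0" if "?N dvd x" "\<bar>x\<bar> \<le> 2 * int L" for x
    using that dvd_imp_le_int[of x ?N] by fastforce
  show "inj_on (\<lambda>v. nat (v mod ?N)) (signed_range L)"
  proof (rule inj_onI)
    fix x y assume "x \<in> signed_range L" "y \<in> signed_range L" "nat (x mod ?N) = nat (y mod ?N)"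
    then have "?N dvd x - y" "\<bar>x - y\<bar> \<le> 2 * int L"
      by (auto simp: signed_range_def eq_nat_nat_iff mod_eq_dvd_iff[symmetric])
    then show "x = y" using small by fastforce
  qed
  show "(\<lambda>v. nat (v mod ?N)) ` signed_range L \<subseteq> {1..<2 * L + 1}"
  proof clarify
    fix v assume v: "v \<in> signed_range L"
    then have "\<not> ?N dvd v" using small[of v] by (auto simp: signed_range_def abs_le_iff)
    then have "v mod ?N \<noteq> 0" by (simp add: dvd_eq_mod_eq_0)
    moreover have "0 \<le> v mod ?N" "v mod ?N < ?N" by simp_all
    ultimately show "nat (v mod ?N) \<in> {1..<2 * L + 1}" by (simp only: atLeastLessThan_iff) linarith
  qed
qed (simp_all add: card_signed_range)

lemma zero_sum_magic_of_signed_magic_mod: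
  assumes "signed_magic_mod m n B"
  shows "zero_sum_magic_pfa (m * n + 1) (Zstar (m * n + 1)) m n n m
    (\<lambda>i j. Some (nat (B i j mod int (m * n + 1))))"
proof -
  define N where "N = m * n + 1"
  define g where "g v = nat (v mod int N)" for v
  have "bij_betw (\<lambda>(i, j). B i j) ({..<m} \<times> {..<n}) (signed_range (m * n div 2))"
    and "even (m * n)" using assms by (simp_all add: signed_magic_mod_def)
  moreover have "2 * (m * n div 2) + 1 = N"
    using \<open>even (m * n)\<close> by (auto simp: N_def)
  ultimately have bij: "bij_betw (g \<circ> (\<lambda>(i, j). B i j)) ({..<m} \<times> {..<n}) (Zstar N)"
    using bij_betw_trans[OF _ bij_betw_mod_signed_range] unfolding Zstar_def g_def[abs_def] by metis
  have fiber: "card {(i, j). i < m \<and> j < n \<and> g (B i j) = x} = 1" if "x \<in> Zstar N" for x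
  proof -
    have "(g \<circ> (\<lambda>(i, j). B i j)) ` ({..<m} \<times> {..<n}) \<subseteq> Zstar N"
      using bij by (simp add: bij_betw_def)
    then have "card {p \<in> {..<m} \<times> {..<n}. (g \<circ> (\<lambda>(i, j). B i j)) p = x} = 1"
      using bij_betw_iff_card_fibers bij that by blast
    moreover have "{(i, j). i < m \<and> j < n \<and> g (B i j) = x} =
        {p \<in> {..<m} \<times> {..<n}. (g \<circ> (\<lambda>(i, j). B i j)) p = x}"
      by auto
    ultimately show ?thesis by simp
  qed
  have N: "int N = int (m * n) + 1" by (simp add: N_def)
  have rows: "(\<Sum>j\<in>{..<n}. g (B i j)) mod N = 0" if "i < m" for i
    using assms that unfolding g_def
    by (intro sum_nat_mod_eq_zero) (simp add: N_def, simp add: signed_magic_mod_def N)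
  have cols: "(\<Sum>i\<in>{..<m}. g (B i j)) mod N = 0" if "j < n" for j
    using assms that unfolding g_def
    by (intro sum_nat_mod_eq_zero) (simp add: N_def, simp add: signed_magic_mod_def N)
  have full: "{j. j < n \<and> Some (g (B i j)) \<noteq> None} = {..<n}" "{i. i < m \<and> Some (g (B i j)) \<noteq> None} = {..<m}"
    for i j by auto
  show ?thesis
    unfolding N_def[symmetric] g_def[symmetric] zero_sum_magic_pfa_def full option.sel
    using fiber bij_betwE[OF bij] rows cols by (auto simp: Zstar_def)
qed

section \<open>Necessary conditions\<close>

lemma zero_sum_magic_pfaD:
  assumes "zero_sum_magic_pfa N \<Omega> m n s k A"
  shows "\<And>i j x. i < m \<Longrightarrow> j < n \<Longrightarrow> A i j = Some x \<Longrightarrow> x \<in> \<Omega>"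
    and "\<And>x. x \<in> \<Omega> \<Longrightarrow> card {(i, j). i < m \<and> j < n \<and> A i j = Some x} = 1"
    and "\<And>i. i < m \<Longrightarrow> card {j. j < n \<and> A i j \<noteq> None} = s"
    and "\<And>i. i < m \<Longrightarrow> (\<Sum>j\<in>{j. j < n \<and> A i j \<noteq> None}. the (A i j)) mod N = 0"
    and "\<And>j. j < n \<Longrightarrow> (\<Sum>i\<in>{i. i < m \<and> A i j \<noteq> None}. the (A i j)) mod N = 0"
  using assms unfolding zero_sum_magic_pfa_def by blast+

lemma zero_sum_magic_full_cells:
  assumes "zero_sum_magic_pfa N \<Omega> m n n k A" "i < m" "j < n"
  shows "A i j \<noteq> None"
proof -
  have "card {j. j < n \<and> A i j \<noteq> None} = n"
    using zero_sum_magic_pfaD(3)[OF assms(1,2)] by simp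
  then have "{j. j < n \<and> A i j \<noteq> None} = {..<n}" by (intro card_subset_eq) auto
  then show ?thesis using assms(3) by auto
qed

lemma zero_sum_magic_full_bij:
  assumes "zero_sum_magic_pfa N \<Omega> m n n k A"
  shows "bij_betw (\<lambda>(i, j). the (A i j)) ({..<m} \<times> {..<n}) \<Omega>"
proof -
  have filled: "A i j \<noteq> None" if "i < m" "j < n" for i j
    using zero_sum_magic_full_cells[OF assms that] .
  have "(\<lambda>(i, j). the (A i j)) ` ({..<m} \<times> {..<n}) \<subseteq> \<Omega>"
  proof clarify
    fix i j assume "i < m" "j < n"
    with filled[OF this] show "the (A i j) \<in> \<Omega>"
      using zero_sum_magic_pfaD(1)[OF assms] by auto
  qed
  moreover have "card {p \<in> {..<m} \<times> {..<n}. (\<lambda>(i, j). the (A i j)) p = x} = 1" if "x \<in> \<Omega>" for x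
  proof -
    have "{p \<in> {..<m} \<times> {..<n}. (\<lambda>(i, j). the (A i j)) p = x} =
        {(i, j). i < m \<and> j < n \<and> A i j = Some x}"
      using filled by fastforce
    then show ?thesis using zero_sum_magic_pfaD(2)[OF assms that] by simp
  qed
  ultimately show ?thesis by (simp add: bij_betw_iff_card_fibers)
qed

lemma zero_sum_magic_full_line_sums:
  assumes "zero_sum_magic_pfa N \<Omega> m n n k A"
  shows "\<And>i. i < m \<Longrightarrow> (\<Sum>j<n. the (A i j)) mod N = 0"
    and "\<And>j. j < n \<Longrightarrow> (\<Sum>i<m. the (A i j)) mod N = 0"
proof -
  have rows: "{j. j < n \<and> A i j \<noteq> None} = {..<n}" if "i < m" for i
    using zero_sum_magic_full_cells[OF assms that] by auto
  have cols: "{i. i < m \<and> A i j \<noteq> None} = {..<m}" if "j < n" for j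
    using zero_sum_magic_full_cells[OF assms _ that] by auto
  show "(\<Sum>j<n. the (A i j)) mod N = 0" if "i < m" for i
    using zero_sum_magic_pfaD(4)[OF assms that] unfolding rows[OF that] .
  show "(\<Sum>i<m. the (A i j)) mod N = 0" if "j < n" for j
    using zero_sum_magic_pfaD(5)[OF assms that] unfolding cols[OF that] .
qed

lemma no_bij_2x2_zero_sums_mod_5:
  fixes h :: "nat \<times> nat \<Rightarrow> nat"
  assumes "bij_betw h ({..<2} \<times> {..<2}) {1..<5::nat}"
    and "(h (0, 0) + h (0, 1)) mod 5 = 0" "(h (0, 0) + h (1, 0)) mod 5 = 0"
  shows False
proof -
  have "h (0, 0) \<in> {1..<5}" "h (0, 1) \<in> {1..<5}" "h (1, 0) \<in> {1..<5}"
    using bij_betwE[OF assms(1)] by auto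
  then have "h (0, 1) = h (1, 0)" using assms(2,3) by auto presburger
  moreover have "h (0, 1) \<noteq> h (1, 0)"
    using assms(1) unfolding bij_betw_def inj_on_def by force
  ultimately show False by simp
qed

lemma zero_sum_magic_full_Zstar_necessary:
  assumes "m \<ge> 2" "n \<ge> 2" and A: "zero_sum_magic_pfa (m * n + 1) (Zstar (m * n + 1)) m n n m A"
  shows "odd (m * n + 1) \<and> m * n + 1 > 5"
proof -
  define N where "N = m * n + 1"
  define h where "h = (\<lambda>(i, j). the (A i j))"
  have bij: "bij_betw h ({..<m} \<times> {..<n}) {1..<N}"
    using zero_sum_magic_full_bij[OF A] by (simp add: Zstar_def N_def h_def)
  have rows: "(\<Sum>j<n. h (i, j)) mod N = 0" if "i < m" for i
    using zero_sum_magic_full_line_sums(1)[OF A that] by (simp add: N_def h_def)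
  have cols: "(\<Sum>i<m. h (i, j)) mod N = 0" if "j < n" for j
    using zero_sum_magic_full_line_sums(2)[OF A that] by (simp add: N_def h_def)
  have "2 * 2 \<le> m * n" using assms(1,2) by (intro mult_le_mono)
  then have "N \<ge> 5" by (simp add: N_def)
  have "(\<Sum>x\<in>{1..<N}. x) mod N = 0" by (rule sum_mod_eq_zero_if_row_sums[OF bij rows])
  then have "odd N" using sum_atLeastLessThan_one_mod_even[of N] \<open>N \<ge> 5\<close> by auto
  moreover have "N \<noteq> 5"
  proof
    assume "N = 5"
    then have "m * n = 4" by (simp add: N_def)
    moreover have "m * 2 \<le> m * n" "2 * n \<le> m * n" using assms(1,2) by simp_all
    ultimately have "m = 2" "n = 2" using assms(1,2) by linarith+
    then show False
      using no_bij_2x2_zero_sums_mod_5[of h] bij rows[of 0] cols[of 0] \<open>N = 5\<close>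
      by (simp add: numeral_2_eq_2)
  qed
  ultimately show ?thesis using \<open>N \<ge> 5\<close> by (simp add: N_def)
qed

lemma signed_magic_of_row_permutations:
  assumes "m * n = 2 * L"
    and inj: "inj_on (\<lambda>(i, s). c i s) ({..<m} \<times> {..<n})"
    and range: "\<And>i s. i < m \<Longrightarrow> s < n \<Longrightarrow> c i s \<in> signed_range L"
    and perm: "\<And>i. i < m \<Longrightarrow> bij_betw (\<pi> i) {..<n} {..<n}"
    and rows: "\<And>i. i < m \<Longrightarrow> (\<Sum>s<n. c i s) = 0"
    and cols: "\<And>j. j < n \<Longrightarrow> (\<Sum>i<m. c i (\<pi> i j)) = 0"
  shows "signed_magic m n (\<lambda>i j. c i (\<pi> i j))"
proof -
  have "bij_betw (\<lambda>(i, j). (i, \<pi> i j)) ({..<m} \<times> {..<n}) ({..<m} \<times> {..<n})"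
  proof (rule inj_on_card_eq_imp_bij_betw)
    show "inj_on (\<lambda>(i, j). (i, \<pi> i j)) ({..<m} \<times> {..<n})"
      using perm by (auto simp: inj_on_def bij_betw_def)
  qed (use perm in \<open>auto dest: bij_betwE\<close>)
  moreover have "bij_betw (\<lambda>(i, s). c i s) ({..<m} \<times> {..<n}) (signed_range L)"
    using assms(1) inj range
    by (intro inj_on_card_eq_imp_bij_betw) (auto simp: card_signed_range card_cartesian_product)
  ultimately have "bij_betw ((\<lambda>(i, s). c i s) \<circ> (\<lambda>(i, j). (i, \<pi> i j))) ({..<m} \<times> {..<n}) (signed_range L)"
    by (rule bij_betw_trans)
  moreover have "(\<lambda>(i, s). c i s) \<circ> (\<lambda>(i, j). (i, \<pi> i j)) = (\<lambda>(i, j). c i (\<pi> i j))"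
    by (auto simp: fun_eq_iff)
  ultimately have "bij_betw (\<lambda>(i, j). c i (\<pi> i j)) ({..<m} \<times> {..<n}) (signed_range (m * n div 2))"
    using assms(1) by simp
  moreover have "(\<Sum>j<n. c i (\<pi> i j)) = 0" if "i < m" for i
    using sum.reindex_bij_betw[OF perm[OF that], of "c i"] rows[OF that] by simp
  ultimately show ?thesis using assms(1) cols by (simp add: signed_magic_def)
qed

text \<open>Row \<open>i < 2p\<close> of the 3- and 5-column families contains the values \<open>\<alpha> + \<beta> i\<close> listed below
  (\<open>lower\<close> means \<open>i < p\<close>). In each row the first three sum to zero and the last two are opposite;
  over all rows the first three columns exhaust \<open>\<plusminus>1, \<dots>, \<plusminus>3p\<close> and all five \<open>\<plusminus>1, \<dots>, \<plusminus>5p\<close>.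
  The column sums are made to vanish by permuting each row, with a permutation that is constant on
  a few segments of rows.\<close>
definition content_line :: "nat \<Rightarrow> bool \<Rightarrow> nat \<Rightarrow> int \<times> int" where
  "content_line p lower s =
     (if lower then [(1, 1), (3 * int p - 1, -2), (- 3 * int p, 1), (5 * int p, -1), (- 5 * int p, 1)]
      else [(- 3 * int p, 1), (5 * int p, -2), (- 2 * int p, 1), (5 * int p, -1), (- 5 * int p, 1)]) ! s"

definition row_content :: "nat \<Rightarrow> nat \<Rightarrow> nat \<Rightarrow> int" where
  "row_content p i s = fst (content_line p (i < p) s) + snd (content_line p (i < p) s) * int i"

lemma row_content_inj: "inj_on (\<lambda>(i, s). row_content p i s) ({..<2 * p} \<times> {..<5})"
  by (rule inj_onI) (auto simp: row_content_def content_line_def less_5_cases split: if_splits; presburger)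

lemma sum_row_content3: "(\<Sum>s<3. row_content p i s) = 0"
  by (simp add: row_content_def content_line_def numeral_3_eq_3)

lemma sum_row_content5: "(\<Sum>s<5. row_content p i s) = 0"
  by (simp add: row_content_def content_line_def eval_nat_numeral)

definition double_segment_sum :: "nat \<Rightarrow> nat \<Rightarrow> nat \<Rightarrow> nat \<Rightarrow> int" where
  "double_segment_sum p a b s =
    2 * (int b - int a) * fst (content_line p (a < p) s)
    + snd (content_line p (a < p) s) * (int b * (int b - 1) - int a * (int a - 1))"

lemma double_sum_row_content_segment:
  assumes "a \<le> b" "b \<le> p \<or> p \<le> a" "\<And>i. a \<le> i \<Longrightarrow> i < b \<Longrightarrow> \<sigma> i = s"
  shows "2 * (\<Sum>i\<in>{a..<b}. row_content p i (\<sigma> i)) = double_segment_sum p a b s"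
proof -
  have "(\<Sum>i\<in>{a..<b}. row_content p i (\<sigma> i)) =
        (\<Sum>i\<in>{a..<b}. fst (content_line p (a < p) s) + snd (content_line p (a < p) s) * int i)"
    using assms by (intro sum.cong) (auto simp: row_content_def)
  then show ?thesis using double_sum_affine[OF assms(1)] by (simp add: double_segment_sum_def)
qed

lemma double_column_sum_piecewise:
  assumes "\<And>k. k < n \<Longrightarrow> b k \<le> b (Suc k)"
    and "\<And>k. k < n \<Longrightarrow> b (Suc k) \<le> p \<or> p \<le> b k"
    and "\<And>k i. k < n \<Longrightarrow> b k \<le> i \<Longrightarrow> i < b (Suc k) \<Longrightarrow> \<sigma> i = s k"
  shows "2 * (\<Sum>i\<in>{b 0..<b n}. row_content p i (\<sigma> i)) =
    (\<Sum>k<n. double_segment_sum p (b k) (b (Suc k)) (s k))"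
proof -
  have "2 * (\<Sum>i\<in>{b 0..<b n}. row_content p i (\<sigma> i)) =
      (\<Sum>k<n. 2 * (\<Sum>i\<in>{b k..<b (Suc k)}. row_content p i (\<sigma> i)))"
    by (simp add: sum_atLeastLessThan_breakpoints[of n b, OF assms(1)] sum_distrib_left)
  also have "\<dots> = (\<Sum>k<n. double_segment_sum p (b k) (b (Suc k)) (s k))"
    using assms by (intro sum.cong refl double_sum_row_content_segment) auto
  finally show ?thesis .
qed

definition even_layout :: "nat \<Rightarrow> nat \<Rightarrow> nat list" where
  "even_layout q i =
    (if i < q then [0, 1, 2] else if i < 2 * q then [0, 2, 1] else if i < 3 * q then [2, 0, 1] else [2, 1, 0])"

lemma even_layout_column_sum:
  assumes "j < 3"
  shows "(\<Sum>i<2 * (2 * q). row_content (2 * q) i (even_layout q i ! j)) = 0"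
proof -
  have "2 * (\<Sum>i\<in>{0 * q..<4 * q}. row_content (2 * q) i (even_layout q i ! j)) =
      (\<Sum>k<4. double_segment_sum (2 * q) (k * q) (Suc k * q) ([[0, 1, 2], [0, 2, 1], [2, 0, 1], [2, 1, 0]] ! k ! j))"
    by (rule double_column_sum_piecewise[where b="\<lambda>k. k * q"])
      (auto simp: less_4_cases even_layout_def)
  also have "\<dots> = 0"
    using assms by (auto simp: double_segment_sum_def content_line_def less_Suc_eq numeral_3_eq_3 eval_nat_numeral algebra_simps)
  finally show ?thesis by (simp add: lessThan_atLeast0 mult.commute)
qed

definition odd_breakpoint :: "nat \<Rightarrow> nat \<Rightarrow> nat" where
  "odd_breakpoint q k = [0, 1, 2, q + 1, 2 * q + 1, 3 * q + 1, 4 * q, 4 * q + 1, 4 * q + 2] ! k"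

definition odd_layout :: "nat list list \<Rightarrow> nat \<Rightarrow> nat \<Rightarrow> nat list" where
  "odd_layout P q i = P !
    (if i < 1 then 0 else if i < 2 then 1 else if i < q + 1 then 2 else if i < 2 * q + 1 then 3
     else if i < 3 * q + 1 then 4 else if i < 4 * q then 5 else if i < 4 * q + 1 then 6 else 7)"

lemma double_odd_layout_column_sum:
  assumes "q \<ge> 1"
  shows "2 * (\<Sum>i<2 * (2 * q+1). row_content (2 * q+1) i (odd_layout P q i ! j)) =
    (\<Sum>k<8. double_segment_sum (2 * q+1) (odd_breakpoint q k) (odd_breakpoint q (Suc k)) (P ! k ! j))"
proof -
  have "2 * (\<Sum>i\<in>{odd_breakpoint q 0..<odd_breakpoint q 8}. row_content (2 * q+1) i (odd_layout P q i ! j)) =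
    (\<Sum>k<8. double_segment_sum (2 * q+1) (odd_breakpoint q k) (odd_breakpoint q (Suc k)) (P ! k ! j))"
    by (rule double_column_sum_piecewise)
      (use assms in \<open>auto simp: less_8_cases odd_breakpoint_def odd_layout_def\<close>)
  then show ?thesis by (simp add: odd_breakpoint_def lessThan_atLeast0)
qed

definition odd_layout3 :: "nat list list" where
  "odd_layout3 = [[0,1,2], [2,0,1], [2,1,0], [1,2,0], [1,0,2], [0,1,2], [0,2,1], [2,1,0]]"

definition odd_layout5 :: "nat list list" where
  "odd_layout5 = [[0,2,3,1,4], [2,1,4,3,0], [2,1,0,3,4], [1,2,0,4,3], [1,0,2,4,3], [0,1,2,3,4],
     [0,3,4,1,2], [2,1,3,0,4]]"

lemma odd_layout3_column_sum:
  assumes "q \<ge> 1" "j < 3"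
  shows "(\<Sum>i<2 * (2 * q+1). row_content (2 * q+1) i (odd_layout odd_layout3 q i ! j)) = 0"
proof -
  have "2 * (\<Sum>i<2 * (2 * q+1). row_content (2 * q+1) i (odd_layout odd_layout3 q i ! j)) = 0"
    unfolding double_odd_layout_column_sum[OF assms(1)] using assms
    by (auto simp: odd_layout3_def odd_breakpoint_def double_segment_sum_def content_line_def
        less_Suc_eq numeral_3_eq_3 eval_nat_numeral algebra_simps)
  then show ?thesis by simp
qed

lemma odd_layout5_column_sum:
  assumes "q \<ge> 1" "j < 5"
  shows "(\<Sum>i<2 * (2 * q+1). row_content (2 * q+1) i (odd_layout odd_layout5 q i ! j)) = 0"
proof -
  have "2 * (\<Sum>i<2 * (2 * q+1). row_content (2 * q+1) i (odd_layout odd_layout5 q i ! j)) = 0"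
    unfolding double_odd_layout_column_sum[OF assms(1)] using assms
    by (auto simp: odd_layout5_def odd_breakpoint_def double_segment_sum_def content_line_def
        less_Suc_eq eval_nat_numeral algebra_simps)
  then show ?thesis by simp
qed

lemma row_content_in_signed_range5: "i < 2 * p \<Longrightarrow> s < 5 \<Longrightarrow> row_content p i s \<in> signed_range (5 * p)"
  by (auto simp: row_content_def content_line_def signed_range_def less_5_cases)

lemma row_content_in_signed_range3: "i < 2 * p \<Longrightarrow> s < 3 \<Longrightarrow> row_content p i s \<in> signed_range (3 * p)"
  by (auto simp: row_content_def content_line_def signed_range_def less_Suc_eq numeral_3_eq_3)

lemma signed_magic_even_layout:
  assumes "q \<ge> 1"
  shows "signed_magic (2 * (2 * q)) 3 (\<lambda>i j. row_content (2 * q) i (even_layout q i ! j))"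
proof (rule signed_magic_of_row_permutations[where L = "3 * (2 * q)"])
  show "inj_on (\<lambda>(i, s). row_content (2 * q) i s) ({..<2 * (2 * q)} \<times> {..<3})"
    by (rule inj_on_subset[OF row_content_inj]) auto
  show "bij_betw ((!) (even_layout q i)) {..<3} {..<3}" for i
    unfolding even_layout_def by (auto intro!: bij_betw_nth_permutation)
qed (simp, erule (1) row_content_in_signed_range3, rule sum_row_content3, erule even_layout_column_sum)

lemma signed_magic_odd_layout3:
  assumes "q \<ge> 1"
  shows "signed_magic (2 * (2 * q + 1)) 3 (\<lambda>i j. row_content (2 * q + 1) i (odd_layout odd_layout3 q i ! j))"
proof (rule signed_magic_of_row_permutations[where L = "3 * (2 * q + 1)"])
  show "inj_on (\<lambda>(i, s). row_content (2 * q + 1) i s) ({..<2 * (2 * q + 1)} \<times> {..<3})"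
    by (rule inj_on_subset[OF row_content_inj]) auto
  show "bij_betw ((!) (odd_layout odd_layout3 q i)) {..<3} {..<3}" for i
    unfolding odd_layout_def odd_layout3_def by (auto intro!: bij_betw_nth_permutation)
qed (simp, erule (1) row_content_in_signed_range3, rule sum_row_content3,
    erule odd_layout3_column_sum[OF assms])

lemma signed_magic_odd_layout5:
  assumes "q \<ge> 1"
  shows "signed_magic (2 * (2 * q + 1)) 5 (\<lambda>i j. row_content (2 * q + 1) i (odd_layout odd_layout5 q i ! j))"
proof (rule signed_magic_of_row_permutations[where L = "5 * (2 * q + 1)"])
  show "bij_betw ((!) (odd_layout odd_layout5 q i)) {..<5} {..<5}" for i
    unfolding odd_layout_def odd_layout5_def by (auto intro!: bij_betw_nth_permutation)
qed (simp, rule row_content_inj, erule (1) row_content_in_signed_range5, rule sum_row_content5,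
    erule odd_layout5_column_sum[OF assms])

lemma array_transpose_transpose [simp]: "array_transpose (array_transpose B) = B"
  by (simp add: array_transpose_def fun_eq_iff)

lemma signed_magic_hconcat_exists:
  assumes "signed_magic m n1 A" "signed_magic m n2 B" "sign_balanced m n2 B"
  obtains C where "signed_magic m (n1 + n2) C" "sign_balanced m n1 A \<Longrightarrow> sign_balanced m (n1 + n2) C"
  using signed_magic_hconcat[OF assms] sign_balanced_hconcat[OF _ assms(3)] by blast

lemma signed_magic_vconcat_exists:
  assumes "signed_magic m1 n A" "signed_magic m2 n B" "sign_balanced m2 n B"
  obtains C where "signed_magic (m1 + m2) n C" "sign_balanced m1 n A \<Longrightarrow> sign_balanced (m1 + m2) n C"
proof -
  obtain C where "signed_magic n (m1 + m2) C"
    and "sign_balanced n m1 (array_transpose A) \<Longrightarrow> sign_balanced n (m1 + m2) C"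
    using signed_magic_hconcat_exists assms signed_magic_transpose sign_balanced_transpose by metis
  then show thesis
    using that[of "array_transpose C"] signed_magic_transpose sign_balanced_transpose by metis
qed

lemma signed_magic_no_rows: "signed_magic 0 n B" "sign_balanced 0 n B"
  by (simp_all add: signed_magic_def sign_balanced_def signed_range_def bij_betw_def)

lemma signed_magic_no_cols: "signed_magic m 0 B" "sign_balanced m 0 B"
  by (simp_all add: signed_magic_def sign_balanced_def signed_range_def bij_betw_def)

lemma signed_magic_by_enumeration:
  assumes "m * n = 2 * L"
    and "distinct (map (\<lambda>(i, j). B i j) (List.product [0..<m] [0..<n]))"
    and "\<And>i j. i < m \<Longrightarrow> j < n \<Longrightarrow> B i j \<in> signed_range L"
    and "\<And>i. i < m \<Longrightarrow> (\<Sum>j<n. B i j) = 0" "\<And>j. j < n \<Longrightarrow> (\<Sum>i<m. B i j) = 0"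
  shows "signed_magic m n B"
proof -
  have "inj_on (\<lambda>(i, j). B i j) ({..<m} \<times> {..<n})"
    using assms(2) by (simp add: distinct_map lessThan_atLeast0)
  from signed_magic_of_row_permutations[OF assms(1) this assms(3) _ assms(4), of "\<lambda>i j. j"] assms(5)
  show ?thesis by (simp add: bij_betw_def)
qed

definition block_2x4 :: "nat \<Rightarrow> nat \<Rightarrow> int" where
  "block_2x4 i j = (if i = 0 then 1 else -1) * [1, -2, -3, 4] ! j"

lemma signed_magic_block_2x4: "signed_magic 2 4 block_2x4" "sign_balanced 2 4 block_2x4"
proof -
  show "signed_magic 2 4 block_2x4"
    by (rule signed_magic_by_enumeration[where L = 4])
      (auto simp: block_2x4_def signed_range_def upt_rec less_Suc_eq eval_nat_numeral)
  show "sign_balanced 2 4 block_2x4"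
    by (auto simp: sign_balanced_def block_2x4_def less_Suc_eq eval_nat_numeral)
qed

text \<open>The seed for \<open>m \<equiv> n \<equiv> 2 (mod 4)\<close>, where blocks with four rows or columns do not suffice.\<close>
definition square_6x6 :: "nat \<Rightarrow> nat \<Rightarrow> int" where
  "square_6x6 i j = [[13, -16, -10, 15, -3, 1], [4, -9, 2, -6, 16, -7], [-15, -11, 14, 6, -4, 10],
     [-5, 18, -18, -12, 12, 5], [17, 7, 3, -2, -8, -17], [-14, 11, 9, -1, -13, 8]] ! i ! j"

lemma signed_magic_square_6x6: "signed_magic 6 6 square_6x6"
  by (rule signed_magic_by_enumeration[where L = 18])
    (auto simp: square_6x6_def signed_range_def upt_rec less_Suc_eq eval_nat_numeral)

lemma balanced_signed_magic_2k_4: "\<exists>B. signed_magic (2 * k) 4 B \<and> sign_balanced (2 * k) 4 B"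
proof (induction k)
  case (Suc k)
  then obtain B where "signed_magic (2 * k) 4 B" "sign_balanced (2 * k) 4 B" by blast
  with signed_magic_block_2x4 show ?case
    by (metis signed_magic_vconcat_exists mult_Suc_right add.commute)
qed (use signed_magic_no_rows in auto)

lemma balanced_signed_magic_4k_2: "\<exists>B. signed_magic (4 * k) 2 B \<and> sign_balanced (4 * k) 2 B"
proof (induction k)
  case (Suc k)
  then obtain B where "signed_magic (4 * k) 2 B" "sign_balanced (4 * k) 2 B" by blast
  with signed_magic_block_2x4 signed_magic_transpose sign_balanced_transpose show ?case
    by (metis signed_magic_vconcat_exists mult_Suc_right add.commute)
qed (use signed_magic_no_rows in auto)

lemma balanced_signed_magic_exists:
  assumes "even m" "even n" "4 dvd m \<or> 4 dvd n"
  shows "\<exists>B. signed_magic m n B \<and> sign_balanced m n B"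
proof -
  have widen: "\<exists>B. signed_magic m (w * t) B \<and> sign_balanced m (w * t) B"
    if "\<exists>B. signed_magic m w B \<and> sign_balanced m w B" for w t
  proof (induction t)
    case (Suc t)
    then show ?case
      using that signed_magic_hconcat_exists by (metis mult_Suc_right add.commute)
  qed (use signed_magic_no_cols in auto)
  show ?thesis
    using assms balanced_signed_magic_2k_4 balanced_signed_magic_4k_2 widen
    by (auto elim!: evenE)
qed

lemma signed_magic_even_even:
  assumes "even m" "even n" "4 dvd m \<or> 4 dvd n \<or> (m \<ge> 6 \<and> n \<ge> 6)"
  shows "\<exists>B. signed_magic m n B"
proof (cases "4 dvd m \<or> 4 dvd n")
  case True
  then show ?thesis using balanced_signed_magic_exists assms by blast
next
  case False
  with assms have "m = 6 + 4 * ((m - 6) div 4)" "n = 6 + 4 * ((n - 6) div 4)" by presburger+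
  then obtain a b where m: "m = 6 + 4 * a" and n: "n = 6 + 4 * b" by blast
  obtain C where "signed_magic 6 (4 * b) C" "sign_balanced 6 (4 * b) C"
    using balanced_signed_magic_exists[of 6 "4 * b"] by auto
  then obtain D where D: "signed_magic 6 n D"
    using signed_magic_hconcat_exists[OF signed_magic_square_6x6] n by metis
  obtain E where "signed_magic (4 * a) n E" "sign_balanced (4 * a) n E"
    using balanced_signed_magic_exists[of "4 * a" n] n by auto
  then show ?thesis using signed_magic_vconcat_exists[OF D] m by metis
qed

lemma signed_magic_even_3_5:
  assumes "even m" "m \<ge> 4"
  shows "\<exists>B. signed_magic m 3 B" "\<exists>B. signed_magic m 5 B"
proof -
  have "(\<exists>B. signed_magic m 3 B) \<and> (\<exists>B. signed_magic m 5 B)"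
  proof (cases "4 dvd m")
    case True
    then obtain q where "m = 2 * (2 * q)" by auto
    moreover have "q \<ge> 1" using assms calculation by simp
    ultimately obtain A where A: "signed_magic m 3 A" using signed_magic_even_layout by blast
    obtain C where "signed_magic m 2 C" "sign_balanced m 2 C"
      using balanced_signed_magic_exists[of m 2] True assms by auto
    from signed_magic_hconcat_exists[OF A this] obtain D where "signed_magic m (3 + 2) D" .
    then show ?thesis using A by auto
  next
    case False
    with assms have "m = 2 * (2 * (m div 4) + 1)" "m div 4 \<ge> 1" by presburger+
    then show ?thesis using signed_magic_odd_layout3 signed_magic_odd_layout5 by metis
  qed
  then show "\<exists>B. signed_magic m 3 B" "\<exists>B. signed_magic m 5 B" by blast+
qed

lemma signed_magic_even_odd:
  assumes "even m" "m \<ge> 4" "odd n" "n \<ge> 3"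
  shows "\<exists>B. signed_magic m n B"
proof -
  obtain w k where w: "w = 3 \<or> w = 5" and n: "n = w + 4 * k"
  proof (cases "n mod 4 = 3")
    case True
    then have "n = 3 + 4 * (n div 4)" by presburger
    then show thesis using that by blast
  next
    case False
    with assms have "n = 5 + 4 * (n div 4 - 1)" by presburger
    then show thesis using that by blast
  qed
  then obtain A where A: "signed_magic m w A" using signed_magic_even_3_5[OF assms(1,2)] by blast
  obtain C where "signed_magic m (4 * k) C" "sign_balanced m (4 * k) C"
    using balanced_signed_magic_exists[of m "4 * k"] assms by auto
  then show ?thesis using signed_magic_hconcat_exists[OF A] n by metis
qed

lemma signed_magic_exists:
  assumes "m \<ge> 3" "n \<ge> 3" "even (m * n)"
  shows "\<exists>B. signed_magic m n B"
proof -
  have even_odd: "\<exists>B. signed_magic a b B" if "even a" "odd b" "a \<ge> 3" "b \<ge> 3" for a b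
  proof -
    have "a \<ge> 4" using that by presburger
    then show ?thesis using signed_magic_even_odd[of a b] that by blast
  qed
  consider "even m" "even n" | "even m" "odd n" | "odd m" "even n"
    using assms(3) by auto
  then show ?thesis
  proof cases
    case 1
    then have "4 dvd m \<or> 4 dvd n \<or> (m \<ge> 6 \<and> n \<ge> 6)" using assms(1,2) by presburger
    then show ?thesis using signed_magic_even_even 1 by blast
  next
    case 2
    then show ?thesis using even_odd assms by blast
  next
    case 3
    then obtain B where "signed_magic n m B" using even_odd assms by blast
    then show ?thesis using signed_magic_transpose by blast
  qed
qed

section \<open>Two-row arrays\<close>

lemma two_row_signed_magic_mod:
  fixes w :: "nat \<Rightarrow> int"
  assumes abs: "\<And>j. j < n \<Longrightarrow> \<bar>w j\<bar> = int j + 1"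
    and sum: "(\<Sum>j<n. w j) mod (2 * int n + 1) = 0"
  shows "signed_magic_mod 2 n (\<lambda>i j. (if i = 0 then 1 else -1) * w j)"
proof -
  let ?T = "\<lambda>(i, j). (if i = (0::nat) then 1 else -1) * w j"
  have "inj_on ?T ({..<2} \<times> {..<n})"
  proof (rule inj_onI)
    fix x y assume "x \<in> {..<2} \<times> {..<n}" "y \<in> {..<2} \<times> {..<n}" "?T x = ?T y"
    then obtain i j i' j' where xy: "x = (i, j)" "y = (i', j')"
      and "i < 2" "j < n" "i' < 2" "j' < n" and eq: "?T (i, j) = ?T (i', j')"
      by auto
    then have "\<bar>w j\<bar> = \<bar>w j'\<bar>" by (cases "i = 0"; cases "i' = 0") auto
    then have "j = j'" using abs[OF \<open>j < n\<close>] abs[OF \<open>j' < n\<close>] by simp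
    moreover have "w j \<noteq> 0" using abs[OF \<open>j < n\<close>] by auto
    ultimately show "x = y" using eq xy \<open>i < 2\<close> \<open>i' < 2\<close> by (simp split: if_splits)
  qed
  moreover have "?T p \<in> signed_range n" if dom: "p \<in> {..<2} \<times> {..<n}" for p
  proof -
    obtain i j where p: "p = (i, j)" "j < n" using dom by auto
    have "\<bar>?T p\<bar> = int j + 1" using abs p by (cases "i = 0") auto
    then show ?thesis using p(2) unfolding signed_range_iff by auto
  qed
  then have "?T ` ({..<2} \<times> {..<n}) \<subseteq> signed_range n" by blast
  ultimately have "bij_betw ?T ({..<2} \<times> {..<n}) (signed_range (2 * n div 2))"
    by (intro inj_on_card_eq_imp_bij_betw) (auto simp: card_signed_range card_cartesian_product)
  moreover have "(- (\<Sum>j<n. w j)) mod (2 * int n + 1) = 0"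
    using sum by (simp add: zmod_zminus1_eq_if)
  ultimately show ?thesis
    using sum by (simp add: signed_magic_mod_def sum_distrib_left sum_negf lessThan_nat_numeral)
qed

definition sign_pattern :: "nat \<Rightarrow> int" where
  "sign_pattern r = (if r mod 4 = 0 \<or> r mod 4 = 3 then 1 else -1)"

lemma abs_sign_pattern_mult [simp]: "\<bar>sign_pattern r * x\<bar> = \<bar>x\<bar>"
  by (simp add: sign_pattern_def abs_mult)

text \<open>The pattern \<open>+ - - +\<close> annihilates four consecutive terms of an arithmetic progression.\<close>
lemma sum_sign_pattern_affine: "(\<Sum>r<4 * t. sign_pattern r * (int r + c)) = 0"
proof (induction t)
  case (Suc t)
  have pattern: "sign_pattern (4 * t) = 1" "sign_pattern (Suc (4 * t)) = -1"
    "sign_pattern (Suc (Suc (4 * t))) = -1" "sign_pattern (Suc (Suc (Suc (4 * t)))) = 1"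
    unfolding sign_pattern_def by presburger+
  have four: "4 * Suc t = Suc (Suc (Suc (Suc (4 * t))))" by simp
  show ?case unfolding four sum.lessThan_Suc pattern Suc.IH by (simp add: algebra_simps)
qed simp

lemma sum_sign_pattern_block: "(\<Sum>j\<in>{a..<a + 4 * t}. sign_pattern (j - a) * int (j + 1)) = 0"
proof -
  have "(\<Sum>j\<in>{a..<a + 4 * t}. sign_pattern (j - a) * int (j + 1)) =
      (\<Sum>r<4 * t. sign_pattern r * (int r + int (a + 1)))"
    using sum.shift_bounds_nat_ivl[of "\<lambda>j. sign_pattern (j - a) * int (j + 1)" 0 a "4 * t"]
    by (simp add: lessThan_atLeast0 algebra_simps)
  also have "\<dots> = 0" by (rule sum_sign_pattern_affine)
  finally show ?thesis .
qed

lemma sum_four: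
  fixes a :: nat
  shows "sum f {a..<a + 4} = f a + f (a + 1) + f (a + 2) + (f (a + 3) :: int)"
  by (simp add: numeral_eq_Suc add.assoc)

lemma two_row_signed_magic_mod_4t: "\<exists>B. signed_magic_mod 2 (4 * t) B"
proof -
  have "(\<Sum>j<4 * t. sign_pattern j * int (j + 1)) = 0"
    using sum_sign_pattern_block[of 0 t] by (simp add: lessThan_atLeast0)
  then show ?thesis
    using two_row_signed_magic_mod[of "4 * t" "\<lambda>j. sign_pattern j * int (j + 1)"] by auto
qed

definition top_row_4t_3 :: "nat \<Rightarrow> int" where
  "top_row_4t_3 j = (if j < 3 then [1, 2, -3] ! j else sign_pattern (j - 3) * int (j + 1))"

lemma two_row_signed_magic_mod_4t_3: "\<exists>B. signed_magic_mod 2 (4 * t + 3) B"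
proof -
  let ?w = top_row_4t_3
  have "(\<Sum>j<4 * t + 3. ?w j) = sum ?w {0..<3} + sum ?w {3..<3 + 4 * t}"
    by (simp add: lessThan_atLeast0 sum.atLeastLessThan_concat add.commute)
  moreover have "sum ?w {0..<3} = 0" by (simp add: top_row_4t_3_def numeral_3_eq_3)
  moreover have "sum ?w {3..<3 + 4 * t} = 0"
    using sum_sign_pattern_block[of 3 t] by (simp add: top_row_4t_3_def)
  moreover have "\<bar>?w j\<bar> = int j + 1" for j
    by (auto simp: top_row_4t_3_def less_Suc_eq numeral_3_eq_3)
  ultimately show ?thesis using two_row_signed_magic_mod[of "4 * t + 3" ?w] by auto
qed

definition top_row_4t_5 :: "nat \<Rightarrow> nat \<Rightarrow> int" where
  "top_row_4t_5 t j = (if j = 0 then 1 else if j < 4 * t + 1 then sign_pattern (j - 1) * int (j + 1)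
      else if j = 4 * t + 1 then - int (j + 1) else int (j + 1))"

lemma two_row_signed_magic_mod_4t_5: "\<exists>B. signed_magic_mod 2 (4 * t + 5) B"
proof -
  let ?w = "top_row_4t_5 t"
  have "(\<Sum>j<4 * t + 5. ?w j) = sum ?w {0..<(1 + 4 * t) + 4}"
    by (simp add: lessThan_atLeast0 add.commute)
  also have "\<dots> = sum ?w {0..<1} + sum ?w {1..<1 + 4 * t} + sum ?w {1 + 4 * t..<(1 + 4 * t) + 4}"
    using sum.atLeastLessThan_concat[of 0 1 "1 + 4 * t" ?w]
      sum.atLeastLessThan_concat[of 0 "1 + 4 * t" "(1 + 4 * t) + 4" ?w] by linarith
  also have "sum ?w {0..<1} = 1" by (simp add: top_row_4t_5_def)
  also have "sum ?w {1..<1 + 4 * t} = 0"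
    using sum_sign_pattern_block[of 1 t] by (simp add: top_row_4t_5_def)
  also have "sum ?w {1 + 4 * t..<(1 + 4 * t) + 4} = 8 * int t + 10"
    unfolding sum_four by (simp add: top_row_4t_5_def)
  finally have "(\<Sum>j<4 * t + 5. ?w j) = 2 * int (4 * t + 5) + 1" by simp
  moreover have "\<bar>?w j\<bar> = int j + 1" for j
    by (auto simp: top_row_4t_5_def)
  ultimately show ?thesis using two_row_signed_magic_mod[of "4 * t + 5" ?w] by auto
qed

definition top_row_4t_6 :: "nat \<Rightarrow> nat \<Rightarrow> int" where
  "top_row_4t_6 t j = (if j = 0 then -1 else if j = 1 then 2
      else if j < 4 * t + 2 then sign_pattern (j - 2) * int (j + 1)
      else if j = 4 * t + 2 then - int (j + 1) else int (j + 1))"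

lemma two_row_signed_magic_mod_4t_6: "\<exists>B. signed_magic_mod 2 (4 * t + 6) B"
proof -
  let ?w = "top_row_4t_6 t"
  have "(\<Sum>j<4 * t + 6. ?w j) = sum ?w {0..<(2 + 4 * t) + 4}"
    by (simp add: lessThan_atLeast0 add.commute)
  also have "\<dots> = sum ?w {0..<2} + sum ?w {2..<2 + 4 * t} + sum ?w {2 + 4 * t..<(2 + 4 * t) + 4}"
    using sum.atLeastLessThan_concat[of 0 2 "2 + 4 * t" ?w]
      sum.atLeastLessThan_concat[of 0 "2 + 4 * t" "(2 + 4 * t) + 4" ?w] by linarith
  also have "sum ?w {0..<2} = 1" by (simp add: top_row_4t_6_def numeral_2_eq_2)
  also have "sum ?w {2..<2 + 4 * t} = 0"
    using sum_sign_pattern_block[of 2 t] by (simp add: top_row_4t_6_def)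
  also have "sum ?w {2 + 4 * t..<(2 + 4 * t) + 4} = 8 * int t + 12"
    unfolding sum_four by (simp add: top_row_4t_6_def)
  finally have "(\<Sum>j<4 * t + 6. ?w j) = 2 * int (4 * t + 6) + 1" by simp
  moreover have "\<bar>?w j\<bar> = int j + 1" for j
    by (auto simp: top_row_4t_6_def)
  ultimately show ?thesis using two_row_signed_magic_mod[of "4 * t + 6" ?w] by auto
qed

lemma two_row_signed_magic_mod_exists:
  assumes "n \<ge> 3"
  shows "\<exists>B. signed_magic_mod 2 n B"
proof -
  define q where "q = n div 4"
  have n: "n = 4 * q + n mod 4" by (simp add: q_def)
  have "n mod 4 < 4" by simp
  then consider "n mod 4 = 0" | "n mod 4 = 3" | "n mod 4 = 1" | "n mod 4 = 2" by linarith
  then show ?thesis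
  proof cases
    case 1
    then show ?thesis using two_row_signed_magic_mod_4t[of q] n by simp
  next
    case 2
    then show ?thesis using two_row_signed_magic_mod_4t_3[of q] n by simp
  next
    case 3
    then show ?thesis using two_row_signed_magic_mod_4t_5[of "q - 1"] n assms by (cases q) (auto simp: add.commute)
  next
    case 4
    then show ?thesis using two_row_signed_magic_mod_4t_6[of "q - 1"] n assms by (cases q) (auto simp: add.commute)
  qed
qed

lemma signed_magic_mod_exists:
  assumes "m \<ge> 2" "n \<ge> 2" "even (m * n)" "m * n > 4"
  shows "\<exists>B. signed_magic_mod m n B"
proof -
  consider "m = 2" "n \<ge> 3" | "n = 2" "m \<ge> 3" | "m \<ge> 3" "n \<ge> 3"
    using assms by (cases "m = 2"; cases "n = 2") auto
  then show ?thesis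
  proof cases
    case 1
    then show ?thesis using two_row_signed_magic_mod_exists by blast
  next
    case 2
    then show ?thesis using two_row_signed_magic_mod_exists signed_magic_mod_transpose by blast
  next
    case 3
    then show ?thesis using signed_magic_exists signed_magic_imp_mod assms(3) by blast
  qed
qed

theorem mainTheorem15:
  fixes m n :: nat
  assumes "m \<ge> 2" and "n \<ge> 2"
  shows "(\<exists>A. zero_sum_magic_pfa (m * n + 1) (Zstar (m * n + 1)) m n n m A)
         \<longleftrightarrow> (odd (m * n + 1) \<and> m * n + 1 > 5)"
proof
  assume "\<exists>A. zero_sum_magic_pfa (m * n + 1) (Zstar (m * n + 1)) m n n m A"
  then show "odd (m * n + 1) \<and> m * n + 1 > 5"
    using zero_sum_magic_full_Zstar_necessary assms by blast
next
  assume "odd (m * n + 1) \<and> m * n + 1 > 5"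
  then obtain B where "signed_magic_mod m n B" using signed_magic_mod_exists assms by auto
  then show "\<exists>A. zero_sum_magic_pfa (m * n + 1) (Zstar (m * n + 1)) m n n m A"
    using zero_sum_magic_of_signed_magic_mod by blast
qed

end
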